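(* Fix $R\in\mathbb P_d$ and set $\operatorname{b}_R(P,Q):=\sqrt{\operatorname{B}_R(P,Q)}$ for $P,Q\in\mathbb P_d$. Then for all $P,Q,S\in\mathbb P_d$: (1) $\operatorname{b}_R(P,Q)=\operatorname{b}_R(Q,P)$; (2) $\operatorname{B}_R(P,Q)\ge 0$, so $\operatorname{b}_R(P,Q)\ge0$ is well-defined, and $\operatorname{b}_R(P,Q)=0$ if and only if $P=Q$; (3) $\operatorname{b}_R(P,Q)\le \operatorname{b}_R(P,S)+\operatorname{b}_R(S,Q)$.
   Context: $\mathbb P_d$ is the set of $d\times d$ complex positive definite matrices. The generalized fidelity is $\operatorname{F}_R(P,Q):=\operatorname{Tr}\big[\sqrt{R^{1/2}PR^{1/2}}\,R^{-1}\sqrt{R^{1/2}QR^{1/2}}\big]$ and the squared generalized Bures distance is $\operatorname{B}_R(P,Q):=\operatorname{Tr}[P+Q]-2\,\mathrm{Re}\,\operatorname{F}_R(P,Q)$. *)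

theory Defs
  imports "HOL-Analysis.Analysis"
begin

text \<open>Complex d x d matrices are represented as complex^'d^'d, with the dimension d
given by the finite index type 'd.\<close>

definition conj_transpose :: "complex^'n^'m \<Rightarrow> complex^'m^'n" where
  "conj_transpose A = (\<chi> i j. cnj (A $ j $ i))"

definition hermitian :: "complex^'n^'n \<Rightarrow> bool" where
  "hermitian A \<longleftrightarrow> conj_transpose A = A"

definition qform :: "complex^'n^'n \<Rightarrow> complex^'n \<Rightarrow> complex" where
  "qform A x = (\<Sum>i\<in>UNIV. cnj (x $ i) * ((A *v x) $ i))"

definition pos_def :: "complex^'n^'n \<Rightarrow> bool" where
  "pos_def A \<longleftrightarrow> hermitian A \<and> (\<forall>x. x \<noteq> 0 \<longrightarrow> 0 < Re (qform A x))"

definition pos_semidef :: "complex^'n^'n \<Rightarrow> bool" where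
  "pos_semidef A \<longleftrightarrow> hermitian A \<and> (\<forall>x. 0 \<le> Re (qform A x))"

definition msqrt :: "complex^'n^'n \<Rightarrow> complex^'n^'n" where
  "msqrt A = (THE B. pos_semidef B \<and> B ** B = A)"

definition gen_fidelity :: "complex^'n^'n \<Rightarrow> complex^'n^'n \<Rightarrow> complex^'n^'n \<Rightarrow> complex" where
  "gen_fidelity R P Q =
     trace (msqrt (msqrt R ** P ** msqrt R) ** matrix_inv R ** msqrt (msqrt R ** Q ** msqrt R))"

text \<open>Squared generalized Bures distance B_R(P,Q) = Tr[P+Q] - 2 Re F_R(P,Q)
  (Tr[P+Q] is real for Hermitian P, Q; we take its real part).\<close>
definition gen_bures_sq :: "complex^'n^'n \<Rightarrow> complex^'n^'n \<Rightarrow> complex^'n^'n \<Rightarrow> real" where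
  "gen_bures_sq R P Q = Re (trace (P + Q)) - 2 * Re (gen_fidelity R P Q)"

definition gen_bures :: "complex^'n^'n \<Rightarrow> complex^'n^'n \<Rightarrow> complex^'n^'n \<Rightarrow> real" where
  "gen_bures R P Q = sqrt (gen_bures_sq R P Q)"

end

theory Submission
  imports Defs "HOL-Computational_Algebra.Polynomial"
begin

text \<open>
  Write \<open>H = R^(1/2)\<close> and \<open>X\<^sub>P = H\<^sup>-\<^sup>1 (H P H)^(1/2)\<close>. Then \<open>X\<^sub>P X\<^sub>P\<^sup>* = P\<close> and
  \<open>X\<^sub>P\<^sup>* X\<^sub>Q = (H P H)^(1/2) R\<^sup>-\<^sup>1 (H Q H)^(1/2)\<close>, so taking real traces gives
  \<open>B\<^sub>R(P,Q) = \<parallel>X\<^sub>P - X\<^sub>Q\<parallel>\<^sup>2\<close> in the Frobenius norm. Hence \<open>b\<^sub>R\<close> is the Euclidean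
  distance pulled back along \<open>P \<mapsto> X\<^sub>P\<close>, which is injective because \<open>P = X\<^sub>P X\<^sub>P\<^sup>*\<close>.

  The positive square roots behind \<open>msqrt\<close> are obtained as real polynomials in the matrix,
  interpolating the root at the eigenvalues; the eigenvectors of a Hermitian matrix span
  because a maximiser of the Rayleigh quotient on an invariant subspace is an eigenvector.
\<close>

section \<open>Eigenvectors of self-adjoint maps\<close>

lemma nonneg_quadratic_imp_linear_coeff_zero:
  fixes a b :: real
  assumes "\<And>t. 0 \<le> 2*t*a + t^2*b"
  shows "a = 0"
proof (rule ccontr)
  assume "a \<noteq> 0"
  define c where "c = \<bar>b\<bar> + 1"
  have c: "c > 0" "b < 2 * c" unfolding c_def by auto
  have "0 \<le> 2*(-a/c)*a + (-a/c)^2*b" by (rule assms)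
  also have "\<dots> = a^2 / c^2 * (b - 2*c)"
    using c by (simp add: field_simps power2_eq_square)
  also have "\<dots> < 0"
    using \<open>a \<noteq> 0\<close> c by (intro mult_pos_neg) auto
  finally show False by simp
qed

lemma rayleigh_maximizer_eigenvector:
  fixes f :: "'a::euclidean_space \<Rightarrow> 'a"
  assumes lin: "linear f" and sa: "\<And>x y. f x \<bullet> y = x \<bullet> f y"
    and W: "subspace W" "f ` W \<subseteq> W" and x0: "x0 \<in> W" "x0 \<bullet> x0 = 1"
    and max: "\<And>x. x \<in> W \<Longrightarrow> x \<bullet> f x \<le> (x0 \<bullet> f x0) * (x \<bullet> x)"
  shows "f x0 = (x0 \<bullet> f x0) *\<^sub>R x0"
proof -
  define m where "m = x0 \<bullet> f x0"
  define g where "g = m *\<^sub>R x0 - f x0"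
  have "g \<in> W" unfolding g_def using W x0
    by (meson image_subset_iff subspace_diff subspace_scale)
  have "0 \<le> 2*t*(g \<bullet> g) + t^2*(m*(g \<bullet> g) - g \<bullet> f g)" for t
  proof -
    let ?z = "x0 + t *\<^sub>R g"
    have "?z \<in> W" using W(1) x0 \<open>g \<in> W\<close> by (simp add: subspace_add subspace_scale)
    hence "0 \<le> m * (?z \<bullet> ?z) - ?z \<bullet> f ?z" using max unfolding m_def by fastforce
    moreover have "f ?z = f x0 + t *\<^sub>R f g" using lin by (simp add: linear_add linear_scale)
    ultimately have "0 \<le> 2*t*(g \<bullet> (m *\<^sub>R x0 - f x0)) + t^2*(m*(g \<bullet> g) - g \<bullet> f g)"
      using x0(2) sa[of x0 g, symmetric]
      by (simp add: inner_add_left inner_add_right inner_diff_right inner_commute m_def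
          algebra_simps power2_eq_square)
    then show ?thesis unfolding g_def .
  qed
  hence "g \<bullet> g = 0" by (rule nonneg_quadratic_imp_linear_coeff_zero)
  thus ?thesis by (simp add: g_def m_def)
qed

lemma self_adjoint_eigenvector_in_invariant_subspace:
  fixes f :: "'a::euclidean_space \<Rightarrow> 'a"
  assumes lin: "linear f" and sa: "\<And>x y. f x \<bullet> y = x \<bullet> f y"
    and W: "subspace W" "f ` W \<subseteq> W" and w: "w \<in> W" "w \<noteq> 0"
  shows "\<exists>x\<in>W. x \<noteq> 0 \<and> (\<exists>m. f x = m *\<^sub>R x)"
proof -
  define K where "K = W \<inter> sphere 0 1"
  have "w /\<^sub>R norm w \<in> K"
    using w W(1) by (simp add: K_def subspace_scale)
  hence "K \<noteq> {}" by blast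
  moreover have "compact K" unfolding K_def
    by (simp add: W(1) closed_Int_compact closed_subspace)
  moreover have "continuous_on K (\<lambda>x. x \<bullet> f x)"
    using lin by (intro continuous_intros linear_continuous_on) (simp add: linear_conv_bounded_linear)
  ultimately obtain x0 where x0: "x0 \<in> K" and sup: "\<And>y. y \<in> K \<Longrightarrow> y \<bullet> f y \<le> x0 \<bullet> f x0"
    using continuous_attains_sup by metis
  have x0W: "x0 \<in> W" and x0_unit: "x0 \<bullet> x0 = 1" using x0 by (auto simp: K_def norm_eq_1)
  have "x \<bullet> f x \<le> (x0 \<bullet> f x0) * (x \<bullet> x)" if "x \<in> W" for x
  proof (cases "x = 0")
    case True then show ?thesis using lin by (simp add: linear_0)
  next
    case False
    define y where "y = x /\<^sub>R norm x"
    have "y \<in> K" unfolding K_def y_def using that W(1) False by (simp add: subspace_scale)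
    hence "y \<bullet> f y \<le> x0 \<bullet> f x0" by (rule sup)
    moreover have "y \<bullet> f y = (x \<bullet> f x) / (norm x)^2"
      unfolding y_def using lin by (simp add: linear_scale power2_eq_square divide_inverse)
    ultimately have "x \<bullet> f x \<le> (x0 \<bullet> f x0) * (norm x)^2" using False
      by (simp add: divide_le_eq)
    then show ?thesis by (simp add: power2_norm_eq_inner)
  qed
  hence "f x0 = (x0 \<bullet> f x0) *\<^sub>R x0"
    using rayleigh_maximizer_eigenvector[OF lin sa W x0W x0_unit] by blast
  moreover have "x0 \<noteq> 0" using x0_unit by auto
  ultimately show ?thesis using x0W by blast
qed

lemma self_adjoint_eigenvectors_span:
  fixes f :: "'a::euclidean_space \<Rightarrow> 'a"
  assumes lin: "linear f" and sa: "\<And>x y. f x \<bullet> y = x \<bullet> f y"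
  shows "span {v. \<exists>m. f v = m *\<^sub>R v} = UNIV"
proof (rule ccontr)
  define E where "E = {v. \<exists>m. f v = m *\<^sub>R v}"
  assume "span {v. \<exists>m. f v = m *\<^sub>R v} \<noteq> UNIV"
  hence "dim E < DIM('a)"
    using dim_eq_full dim_subset_UNIV[of E] unfolding E_def by (metis order_less_le)
  then obtain w where w: "w \<noteq> 0" "\<And>y. y \<in> span E \<Longrightarrow> orthogonal w y"
    using orthogonal_to_subspace_exists by blast
  define W where "W = {y. \<forall>x \<in> span E. orthogonal x y}"
  have "f ` E \<subseteq> E" unfolding E_def using lin by (auto simp: linear_scale)
  hence f_span: "f ` span E \<subseteq> span E"
    using span_linear_image[OF lin, of E] by (metis span_mono)
  have "subspace W" unfolding W_def by (rule subspace_orthogonal_to_vectors)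
  moreover have "f ` W \<subseteq> W"
  proof (clarsimp simp: W_def)
    fix x y assume "\<forall>x \<in> span E. orthogonal x y" "x \<in> span E"
    moreover have "f x \<in> span E" using f_span \<open>x \<in> span E\<close> by blast
    ultimately show "orthogonal x (f y)" using sa unfolding orthogonal_def by (metis inner_commute)
  qed
  moreover have "w \<in> W" unfolding W_def using w(2) by (simp add: orthogonal_commute)
  ultimately obtain x where x: "x \<in> W" "x \<noteq> 0" "\<exists>m. f x = m *\<^sub>R x"
    using self_adjoint_eigenvector_in_invariant_subspace[OF lin sa _ _ _ w(1)] by blast
  hence "x \<in> span E" unfolding E_def by (simp add: span_base)
  hence "orthogonal x x" using x(1) unfolding W_def by blast
  thus False using x(2) by (simp add: orthogonal_def)
qed

section \<open>Hermitian and positive definite matrices\<close>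

text \<open>
  The spectral argument runs over the reals: \<open>complex^'n\<close> is a real Euclidean space with
  inner product \<open>Re \<langle>x, y\<rangle>\<close>, and Hermitian matrices are self-adjoint for it.
\<close>

definition cinner :: "complex^'n \<Rightarrow> complex^'n \<Rightarrow> complex" where
  "cinner x y = (\<Sum>i\<in>UNIV. cnj (x $ i) * y $ i)"

lemma inner_eq_Re_cinner: "x \<bullet> y = Re (cinner x y)"
  by (simp add: cinner_def inner_vec_def inner_complex_def)

lemma cinner_matrix_vector_left: "cinner (A *v x) y = cinner x (conj_transpose A *v y)"
proof -
  have "cinner (A *v x) y = (\<Sum>i\<in>UNIV. \<Sum>j\<in>UNIV. cnj (A$i$j) * cnj (x$j) * y$i)"
    by (simp add: cinner_def matrix_vector_mult_def sum_distrib_right mult.assoc)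
  also have "\<dots> = (\<Sum>j\<in>UNIV. \<Sum>i\<in>UNIV. cnj (A$i$j) * cnj (x$j) * y$i)"
    by (rule sum.swap)
  also have "\<dots> = cinner x (conj_transpose A *v y)"
    by (simp add: cinner_def matrix_vector_mult_def conj_transpose_def sum_distrib_left mult_ac)
  finally show ?thesis .
qed

lemma hermitian_inner_self_adjoint: "hermitian A \<Longrightarrow> (A *v x) \<bullet> y = x \<bullet> (A *v y)"
  by (simp add: inner_eq_Re_cinner cinner_matrix_vector_left hermitian_def)

lemma pos_def_iff_inner: "pos_def A \<longleftrightarrow> hermitian A \<and> (\<forall>x. x \<noteq> 0 \<longrightarrow> 0 < x \<bullet> (A *v x))"
  by (simp add: pos_def_def qform_def inner_eq_Re_cinner cinner_def)

lemma pos_semidef_iff_inner: "pos_semidef A \<longleftrightarrow> hermitian A \<and> (\<forall>x. 0 \<le> x \<bullet> (A *v x))"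
  by (simp add: pos_semidef_def qform_def inner_eq_Re_cinner cinner_def)

lemma pos_def_imp_pos_semidef: "pos_def A \<Longrightarrow> pos_semidef A"
  unfolding pos_def_iff_inner pos_semidef_iff_inner by (metis inner_zero_left order.refl less_imp_le)

lemma pos_def_hermitian: "pos_def A \<Longrightarrow> hermitian A"
  by (simp add: pos_def_def)

lemma pos_def_kernel_zero: "pos_def A \<Longrightarrow> A *v x = 0 \<Longrightarrow> x = 0"
  by (metis inner_zero_right less_irrefl pos_def_iff_inner)

lemma pos_def_invertible: "pos_def (A :: complex^'n^'n) \<Longrightarrow> invertible A"
  by (simp add: invertible_left_inverse matrix_left_invertible_ker pos_def_kernel_zero)

lemma conj_transpose_mult:
  "conj_transpose ((A::complex^'n^'m) ** (B::complex^'p^'n)) = conj_transpose B ** conj_transpose A"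
  by (simp add: conj_transpose_def matrix_matrix_mult_def vec_eq_iff mult.commute)

lemma conj_transpose_add: "conj_transpose (A + B) = conj_transpose A + conj_transpose B"
  by (simp add: conj_transpose_def vec_eq_iff)

lemma conj_transpose_scaleR:
  "conj_transpose (c *\<^sub>R (A::complex^'n^'m)) = c *\<^sub>R conj_transpose A"
  by (simp add: conj_transpose_def vec_eq_iff scaleR_conv_of_real[where 'a=complex])

lemma conj_transpose_mat: "conj_transpose (mat 1 :: complex^'n^'n) = mat 1"
  by (simp add: conj_transpose_def vec_eq_iff mat_def)

lemma Re_trace_conj_transpose_mult: "Re (trace (conj_transpose X ** (Y::complex^'n^'m))) = X \<bullet> Y"
proof -
  have "Re (trace (conj_transpose X ** Y)) = (\<Sum>i\<in>UNIV. \<Sum>k\<in>UNIV. X$k$i \<bullet> Y$k$i)"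
    by (simp add: trace_def matrix_matrix_mult_def conj_transpose_def inner_complex_def)
  also have "\<dots> = (\<Sum>k\<in>UNIV. \<Sum>i\<in>UNIV. X$k$i \<bullet> Y$k$i)" by (rule sum.swap)
  also have "\<dots> = X \<bullet> Y" by (simp add: inner_vec_def)
  finally show ?thesis .
qed

lemma matrix_inv_eqI:
  fixes A B :: "'a::field^'n^'n"
  assumes "A ** B = mat 1"
  shows "matrix_inv A = B"
proof -
  have "B ** A = mat 1" using assms by (rule matrix_left_right_inverse[THEN iffD1])
  hence "invertible A" using assms unfolding invertible_def by blast
  hence "matrix_inv A ** A = mat 1"
    unfolding invertible_def matrix_inv_def by (rule someI2_ex) blast+
  hence "matrix_inv A = matrix_inv A ** (A ** B)" using assms by simp
  also have "\<dots> = B" by (simp add: matrix_mul_assoc \<open>matrix_inv A ** A = mat 1\<close>)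
  finally show ?thesis .
qed

lemma matrix_mul_matrix_inv: "invertible A \<Longrightarrow> A ** matrix_inv A = mat 1"
  unfolding invertible_def matrix_inv_def by (rule someI2_ex) blast+

lemma matrix_inv_mult_self:
  fixes A :: "'a::field^'n^'n"
  assumes "invertible A"
  shows "matrix_inv (A ** A) = matrix_inv A ** matrix_inv A"
proof (rule matrix_inv_eqI)
  have "A ** A ** (matrix_inv A ** matrix_inv A) = A ** (A ** matrix_inv A) ** matrix_inv A"
    by (simp add: matrix_mul_assoc)
  thus "A ** A ** (matrix_inv A ** matrix_inv A) = mat 1"
    by (simp add: matrix_mul_matrix_inv[OF assms])
qed

lemma hermitian_matrix_inv:
  assumes "hermitian (A :: complex^'n^'n)" "invertible A"
  shows "hermitian (matrix_inv A)"
proof -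
  have "conj_transpose (A ** matrix_inv A) = mat 1"
    by (simp add: matrix_mul_matrix_inv[OF assms(2)] conj_transpose_mat)
  hence "conj_transpose (matrix_inv A) ** A = mat 1"
    using assms(1) by (simp add: conj_transpose_mult hermitian_def)
  hence "A ** conj_transpose (matrix_inv A) = mat 1"
    by (rule matrix_left_right_inverse[THEN iffD1])
  hence "matrix_inv A = conj_transpose (matrix_inv A)" by (rule matrix_inv_eqI)
  thus ?thesis by (simp add: hermitian_def)
qed

section \<open>Square roots as polynomials in the matrix\<close>

lemma interpolating_poly_exists:
  fixes g :: "real \<Rightarrow> real"
  assumes "finite L"
  shows "\<exists>p. \<forall>x\<in>L. poly p x = g x"
  using assms
proof (induction L rule: finite_induct)
  case empty then show ?case by auto
next
  case (insert u L)
  then obtain p where p: "\<forall>x\<in>L. poly p x = g x" by blast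
  define q where "q = (\<Prod>k\<in>L. [:-k, 1:])"
  have q: "poly q x = (\<Prod>k\<in>L. x - k)" for x unfolding q_def by (simp add: poly_prod)
  have "poly q u \<noteq> 0" using q insert(1,2) by auto
  moreover have "poly q x = 0" if "x \<in> L" for x using q insert(1) that by (simp add: prod_zero_iff)
  ultimately have "\<forall>x\<in>insert u L. poly (p + smult ((g u - poly p u) / poly q u) q) x = g x"
    using p by auto
  then show ?case by blast
qed

lemma matrix_add_rdistrib: "(A + B) ** C = A ** C + B ** C"
  by (simp add: matrix_matrix_mult_def vec_eq_iff sum.distrib distrib_right)

lemma matrix_vector_scaleR_right: "(A::'a::real_algebra_1^'n^'m) *v (c *\<^sub>R x) = c *\<^sub>R (A *v x)"
  by (rule linear_scale[OF matrix_vector_mul_linear])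

lemma matrix_vector_scaleR_left: "(c *\<^sub>R (A::complex^'n^'m)) *v x = c *\<^sub>R (A *v x)"
  by (simp add: matrix_vector_mult_def vec_eq_iff scaleR_conv_of_real[where 'a=complex]
      sum_distrib_left mult_ac)

definition matrix_poly :: "real poly \<Rightarrow> complex^'n^'n \<Rightarrow> complex^'n^'n" where
  "matrix_poly p A = fold_coeffs (\<lambda>a M. a *\<^sub>R mat 1 + A ** M) p 0"

lemma matrix_poly_0 [simp]: "matrix_poly 0 A = 0"
  by (simp add: matrix_poly_def)

lemma matrix_poly_pCons: "matrix_poly (pCons a p) A = a *\<^sub>R mat 1 + A ** matrix_poly p A"
  by (cases "p = 0 \<and> a = 0") (auto simp: matrix_poly_def)

lemma matrix_poly_commute:
  assumes "C ** A = A ** C"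
  shows "C ** matrix_poly p A = matrix_poly p A ** C"
proof (induction p)
  case (pCons a p)
  have "C ** matrix_poly (pCons a p) A = a *\<^sub>R C + A ** (C ** matrix_poly p A)"
    using assms by (simp add: matrix_poly_pCons matrix_add_ldistrib matrix_mul_assoc matrix_scalar_ac)
  also have "\<dots> = matrix_poly (pCons a p) A ** C"
    using pCons.IH by (simp add: matrix_poly_pCons matrix_add_rdistrib matrix_mul_assoc
        scalar_matrix_assoc[symmetric])
  finally show ?case .
qed simp

lemma hermitian_matrix_poly:
  assumes "hermitian A"
  shows "hermitian (matrix_poly p A)"
proof (induction p)
  case (pCons a p)
  have "A ** matrix_poly p A = matrix_poly p A ** A" by (rule matrix_poly_commute) (rule refl)
  then show ?case
    using assms pCons.IH
    by (simp add: hermitian_def matrix_poly_pCons conj_transpose_add conj_transpose_scaleR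
        conj_transpose_mat conj_transpose_mult)
qed (simp add: hermitian_def conj_transpose_def vec_eq_iff)

lemma matrix_poly_eigenvector:
  assumes "A *v v = l *\<^sub>R v"
  shows "matrix_poly p A *v v = poly p l *\<^sub>R v"
proof (induction p)
  case (pCons a p)
  then show ?case
    using assms by (simp add: matrix_poly_pCons matrix_vector_mult_add_rdistrib
        matrix_vector_scaleR_left matrix_vector_scaleR_right matrix_vector_mul_assoc[symmetric]
        algebra_simps)
qed simp

lemma matrix_eq_on_spanning_set:
  fixes A B :: "'a::real_algebra_1^'n^'m"
  assumes "span V = UNIV" "\<And>v. v \<in> V \<Longrightarrow> A *v v = B *v v"
  shows "A = B"
proof -
  have "A *v x = B *v x" for x
    using linear_eq_on_span[OF matrix_vector_mul_linear matrix_vector_mul_linear, of V] assms by auto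
  thus ?thesis by (simp add: matrix_eq)
qed

lemma hermitian_eigenbasis:
  fixes A :: "complex^'n^'n"
  assumes "hermitian A"
  obtains V ev where "finite V" "span V = UNIV" "0 \<notin> V" "\<And>v. v \<in> V \<Longrightarrow> A *v v = ev v *\<^sub>R v"
proof -
  define E where "E = {v. \<exists>m. A *v v = m *\<^sub>R v}"
  have "span E = UNIV" unfolding E_def
    by (rule self_adjoint_eigenvectors_span) (simp_all add: hermitian_inner_self_adjoint[OF assms])
  obtain V where V: "V \<subseteq> E" "independent V" "E \<subseteq> span V"
    using maximal_independent_subset[of E] by blast
  have "span V = UNIV" using \<open>span E = UNIV\<close> V(3) by (metis span_minimal subspace_span top.extremum_unique)
  moreover have "\<forall>v\<in>V. \<exists>m. A *v v = m *\<^sub>R v" using V(1) unfolding E_def by blast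
  then obtain ev where "\<And>v. v \<in> V \<Longrightarrow> A *v v = ev v *\<^sub>R v" by metis
  ultimately show ?thesis
    using that finiteI_independent[OF V(2)] dependent_zero[of V] V(2) by blast
qed

lemma pos_def_eigenvalue_pos:
  assumes "pos_def A" "A *v v = l *\<^sub>R v" "v \<noteq> 0"
  shows "l > 0"
proof -
  have "0 < v \<bullet> (A *v v)" using assms(1,3) by (simp add: pos_def_iff_inner)
  also have "\<dots> = l * (v \<bullet> v)" using assms(2) by simp
  finally show ?thesis using inner_ge_zero[of v] by (auto simp: zero_less_mult_iff)
qed

text \<open>
  Interpolating the fourth root rather than the square root makes the square root a square
  of a Hermitian matrix, hence visibly positive definite.
\<close>

lemma pos_def_fourth_root_poly:
  fixes A :: "complex^'n^'n"
  assumes A: "pos_def A"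
  shows "\<exists>p. (matrix_poly p A ** matrix_poly p A) ** (matrix_poly p A ** matrix_poly p A) = A"
proof -
  obtain V ev where V: "finite V" "span V = UNIV" "0 \<notin> V"
    and ev: "\<And>v. v \<in> V \<Longrightarrow> A *v v = ev v *\<^sub>R v"
    using hermitian_eigenbasis[OF pos_def_hermitian[OF A]] by blast
  have ev_pos: "ev v > 0" if "v \<in> V" for v
    using pos_def_eigenvalue_pos[OF A ev[OF that]] V(3) that by blast
  obtain p where p: "\<forall>x\<in>ev ` V. poly p x = sqrt (sqrt x)"
    using interpolating_poly_exists[OF finite_imageI[OF V(1)], where g = "\<lambda>x. sqrt (sqrt x)"]
    by blast
  define M where "M = matrix_poly p A"
  have "(M ** M ** (M ** M)) *v v = A *v v" if "v \<in> V" for v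
  proof -
    have "M *v v = sqrt (sqrt (ev v)) *\<^sub>R v"
      using matrix_poly_eigenvector[OF ev[OF that]] p that by (simp add: M_def)
    hence "(M ** M ** (M ** M)) *v v = (sqrt (sqrt (ev v)) ^ 4) *\<^sub>R v"
      by (simp add: matrix_vector_mul_assoc[symmetric] matrix_vector_scaleR_right
          numeral_eq_Suc mult_ac)
    also have "sqrt (sqrt (ev v)) ^ 4 = (sqrt (sqrt (ev v)) ^ 2) ^ 2" by (simp flip: power_mult)
    also have "\<dots> = ev v" using ev_pos[OF that] by simp
    finally show ?thesis using ev[OF that] by simp
  qed
  hence "M ** M ** (M ** M) = A" by (rule matrix_eq_on_spanning_set[OF V(2)])
  thus ?thesis unfolding M_def by blast
qed

lemma hermitian_square_pos_def:
  assumes herm: "hermitian M" and ker: "\<And>x. M *v x = 0 \<Longrightarrow> x = 0"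
  shows "pos_def (M ** M)"
  unfolding pos_def_iff_inner
proof (intro conjI allI impI)
  show "hermitian (M ** M)" using herm unfolding hermitian_def by (simp add: conj_transpose_mult)
  fix x :: "complex^'a" assume "x \<noteq> 0"
  have "x \<bullet> ((M ** M) *v x) = (M *v x) \<bullet> (M *v x)"
    by (simp add: matrix_vector_mul_assoc[symmetric] hermitian_inner_self_adjoint[OF herm])
  thus "0 < x \<bullet> ((M ** M) *v x)" using ker \<open>x \<noteq> 0\<close> by fastforce
qed

lemma matrix_commute_square:
  assumes CM: "C ** M = M ** C"
  shows "C ** (M ** M) = (M ** M) ** C"
proof -
  have "C ** (M ** M) = (M ** C) ** M" by (simp add: matrix_mul_assoc CM)
  also have "\<dots> = M ** (M ** C)" by (simp add: matrix_mul_assoc[symmetric] CM)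
  finally show ?thesis by (simp add: matrix_mul_assoc)
qed

lemma pos_def_sqrt_exists:
  fixes A :: "complex^'n^'n"
  assumes A: "pos_def A"
  shows "\<exists>B. pos_def B \<and> B ** B = A \<and> (\<forall>C. C ** A = A ** C \<longrightarrow> C ** B = B ** C)"
proof -
  obtain p where p: "(matrix_poly p A ** matrix_poly p A) ** (matrix_poly p A ** matrix_poly p A) = A"
    using pos_def_fourth_root_poly[OF A] by blast
  define M where "M = matrix_poly p A"
  have MMMM: "M ** M ** (M ** M) = A" using p by (simp add: M_def)
  have "x = 0" if "M *v x = 0" for x
  proof (rule pos_def_kernel_zero[OF A])
    show "A *v x = 0" unfolding MMMM[symmetric] by (simp add: matrix_vector_mul_assoc[symmetric] that)
  qed
  hence "pos_def (M ** M)"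
    using hermitian_square_pos_def hermitian_matrix_poly[OF pos_def_hermitian[OF A]] M_def by blast
  moreover have "C ** (M ** M) = (M ** M) ** C" if "C ** A = A ** C" for C
    using matrix_commute_square[OF matrix_poly_commute[OF that]] by (simp add: M_def)
  ultimately show ?thesis using MMMM by blast
qed

lemma commuting_square_roots_eq:
  assumes B: "pos_def B" and C: "pos_semidef C"
    and sq: "C ** C = B ** B" and comm: "C ** B = B ** C"
  shows "C = B"
proof -
  txt \<open>\<open>(B + C)(B - C) = B\<^sup>2 - C\<^sup>2 = 0\<close>, and \<open>B + C\<close> is injective.\<close>
  have inj: "y = 0" if "(B + C) *v y = 0" for y
  proof (rule ccontr)
    assume "y \<noteq> 0"
    hence "0 < y \<bullet> (B *v y) + y \<bullet> (C *v y)"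
      using B C by (simp add: pos_def_iff_inner pos_semidef_iff_inner add_pos_nonneg)
    also have "\<dots> = y \<bullet> ((B + C) *v y)"
      by (simp add: matrix_vector_mult_add_rdistrib inner_add_right)
    finally show False using that by simp
  qed
  have "(B + C) *v ((B - C) *v x) = 0" for x
  proof -
    have "(B + C) *v ((B - C) *v x)
        = B *v (B *v x) - B *v (C *v x) + (C *v (B *v x) - C *v (C *v x))"
      by (simp add: matrix_vector_mult_add_rdistrib matrix_vector_mult_diff_rdistrib
          matrix_vector_mult_diff_distrib)
    also have "\<dots> = 0" by (simp add: matrix_vector_mul_assoc sq comm)
    finally show ?thesis .
  qed
  hence "(B - C) *v x = 0" for x using inj by blast
  hence "B - C = 0" by (simp add: matrix_eq)
  thus ?thesis by simp
qed

lemma msqrt: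
  fixes A :: "complex^'n^'n"
  assumes A: "pos_def A"
  shows msqrt_pos_def: "pos_def (msqrt A)" and msqrt_square: "msqrt A ** msqrt A = A"
proof -
  obtain B where B: "pos_def B" "B ** B = A" and comm: "\<And>C. C ** A = A ** C \<Longrightarrow> C ** B = B ** C"
    using pos_def_sqrt_exists[OF A] by blast
  have "msqrt A = B" unfolding msqrt_def
  proof (rule the_equality)
    show "pos_semidef B \<and> B ** B = A" using B pos_def_imp_pos_semidef by blast
  next
    fix C assume C: "pos_semidef C \<and> C ** C = A"
    have "C ** (C ** C) = (C ** C) ** C" by (rule matrix_mul_assoc)
    hence "C ** A = A ** C" using C by simp
    hence "C ** B = B ** C" by (rule comm)
    moreover have "C ** C = B ** B" using B(2) C by simp
    ultimately show "C = B" using commuting_square_roots_eq[OF B(1)] C by blast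
  qed
  thus "pos_def (msqrt A)" "msqrt A ** msqrt A = A" using B by simp_all
qed

section \<open>The generalized Bures distance as a Frobenius distance\<close>

lemma pos_def_congruence:
  assumes P: "pos_def P" and H: "hermitian H" and ker: "\<And>x. H *v x = 0 \<Longrightarrow> x = 0"
  shows "pos_def (H ** P ** H)"
  unfolding pos_def_iff_inner
proof (intro conjI allI impI)
  show "hermitian (H ** P ** H)"
    using H pos_def_hermitian[OF P] by (simp add: hermitian_def conj_transpose_mult matrix_mul_assoc)
  fix x :: "complex^'a" assume "x \<noteq> 0"
  hence "0 < (H *v x) \<bullet> (P *v (H *v x))" using P ker by (auto simp: pos_def_iff_inner)
  also have "\<dots> = x \<bullet> ((H ** P ** H) *v x)"
    by (simp add: hermitian_inner_self_adjoint[OF H] matrix_vector_mul_assoc matrix_mul_assoc)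
  finally show "0 < x \<bullet> ((H ** P ** H) *v x)" .
qed

definition bures_factor :: "complex^'n^'n \<Rightarrow> complex^'n^'n \<Rightarrow> complex^'n^'n" where
  "bures_factor R P = matrix_inv (msqrt R) ** msqrt (msqrt R ** P ** msqrt R)"

lemma
  fixes R P :: "complex^'n^'n"
  assumes R: "pos_def R" and P: "pos_def P"
  shows conj_transpose_bures_factor:
      "conj_transpose (bures_factor R P) = msqrt (msqrt R ** P ** msqrt R) ** matrix_inv (msqrt R)"
    and bures_factor_mult_conj_transpose:
      "bures_factor R P ** conj_transpose (bures_factor R P) = P"
proof -
  define H where "H = msqrt R"
  define S where "S = msqrt (H ** P ** H)"
  have H: "pos_def H" unfolding H_def by (rule msqrt_pos_def[OF R])
  have "invertible H" by (rule pos_def_invertible[OF H])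
  hence HK: "H ** matrix_inv H = mat 1" by (rule matrix_mul_matrix_inv)
  hence KH: "matrix_inv H ** H = mat 1" by (rule matrix_left_right_inverse[THEN iffD1])
  have S: "pos_def S" "S ** S = H ** P ** H"
    unfolding S_def using pos_def_congruence[OF P pos_def_hermitian[OF H] pos_def_kernel_zero[OF H]]
    by (simp_all add: msqrt_pos_def msqrt_square)
  have K: "hermitian (matrix_inv H)"
    by (rule hermitian_matrix_inv[OF pos_def_hermitian[OF H] \<open>invertible H\<close>])
  have ct: "conj_transpose (matrix_inv H ** S) = S ** matrix_inv H"
    using K pos_def_hermitian[OF S(1)] by (simp add: conj_transpose_mult hermitian_def)
  thus "conj_transpose (bures_factor R P) = msqrt (msqrt R ** P ** msqrt R) ** matrix_inv (msqrt R)"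
    by (simp add: bures_factor_def H_def S_def)
  have "matrix_inv H ** S ** (S ** matrix_inv H) = matrix_inv H ** (S ** S) ** matrix_inv H"
    by (simp only: matrix_mul_assoc)
  also have "\<dots> = (matrix_inv H ** H) ** P ** (H ** matrix_inv H)"
    by (simp only: S(2) matrix_mul_assoc)
  also have "\<dots> = P" by (simp add: HK KH)
  finally show "bures_factor R P ** conj_transpose (bures_factor R P) = P"
    using ct by (simp add: bures_factor_def H_def S_def)
qed

lemma gen_fidelity_eq_trace_bures_factor:
  assumes R: "pos_def R" and P: "pos_def P" and Q: "pos_def Q"
  shows "gen_fidelity R P Q = trace (conj_transpose (bures_factor R P) ** bures_factor R Q)"
proof -
  have "matrix_inv R = matrix_inv (msqrt R) ** matrix_inv (msqrt R)"
    using matrix_inv_mult_self[OF pos_def_invertible[OF msqrt_pos_def[OF R]]] msqrt_square[OF R]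
    by simp
  thus ?thesis
    unfolding gen_fidelity_def conj_transpose_bures_factor[OF R P]
    by (simp add: bures_factor_def matrix_mul_assoc)
qed

lemma Re_trace_eq_inner_bures_factor:
  assumes R: "pos_def R" and P: "pos_def P"
  shows "Re (trace P) = bures_factor R P \<bullet> bures_factor R P"
  using Re_trace_conj_transpose_mult[of "bures_factor R P" "bures_factor R P"]
  by (simp add: trace_mul_sym[of "conj_transpose (bures_factor R P)"]
      bures_factor_mult_conj_transpose[OF R P])

lemma gen_bures_sq_eq_dist_bures_factor:
  assumes R: "pos_def R" and P: "pos_def P" and Q: "pos_def Q"
  shows "gen_bures_sq R P Q = (dist (bures_factor R P) (bures_factor R Q))\<^sup>2"
proof -
  let ?X = "bures_factor R P" and ?Y = "bures_factor R Q"
  have "gen_bures_sq R P Q = ?X \<bullet> ?X + ?Y \<bullet> ?Y - 2 * (?X \<bullet> ?Y)"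
    by (simp add: gen_bures_sq_def trace_add Re_trace_eq_inner_bures_factor[OF R P]
        Re_trace_eq_inner_bures_factor[OF R Q] gen_fidelity_eq_trace_bures_factor[OF R P Q]
        Re_trace_conj_transpose_mult)
  also have "\<dots> = (?X - ?Y) \<bullet> (?X - ?Y)"
    by (simp add: inner_diff_left inner_diff_right inner_commute)
  also have "\<dots> = (dist ?X ?Y)\<^sup>2" by (simp add: dist_norm power2_norm_eq_inner)
  finally show ?thesis .
qed

lemma gen_bures_eq_dist_bures_factor:
  assumes "pos_def R" "pos_def P" "pos_def Q"
  shows "gen_bures R P Q = dist (bures_factor R P) (bures_factor R Q)"
  by (simp add: gen_bures_def gen_bures_sq_eq_dist_bures_factor[OF assms])

lemma bures_factor_inj:
  assumes R: "pos_def R" and P: "pos_def P" and Q: "pos_def Q"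
    and eq: "bures_factor R P = bures_factor R Q"
  shows "P = Q"
proof -
  have "P = bures_factor R P ** conj_transpose (bures_factor R P)"
    by (rule bures_factor_mult_conj_transpose[OF R P, symmetric])
  also have "\<dots> = Q" unfolding eq by (rule bures_factor_mult_conj_transpose[OF R Q])
  finally show ?thesis .
qed

theorem mainTheorem3:
  fixes R P Q S :: "complex^'d^'d"
  assumes "pos_def R" and "pos_def P" and "pos_def Q" and "pos_def S"
  shows "gen_bures R P Q = gen_bures R Q P
    \<and> gen_bures_sq R P Q \<ge> 0
    \<and> (gen_bures R P Q = 0 \<longleftrightarrow> P = Q)
    \<and> gen_bures R P Q \<le> gen_bures R P S + gen_bures R S Q"
proof -
  let ?X = "bures_factor R"
  have dist: "gen_bures R A B = dist (?X A) (?X B)" if "pos_def A" "pos_def B" for A B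
    using gen_bures_eq_dist_bures_factor[OF assms(1) that] .
  have "gen_bures R P Q = 0 \<longleftrightarrow> P = Q"
    unfolding dist[OF assms(2,3)] using bures_factor_inj[OF assms(1-3)] by auto
  moreover have "gen_bures R P Q \<le> gen_bures R P S + gen_bures R S Q"
    unfolding dist[OF assms(2,3)] dist[OF assms(2,4)] dist[OF assms(4,3)] by (rule dist_triangle)
  ultimately show ?thesis
    using dist[OF assms(2,3)] dist[OF assms(3,2)] gen_bures_sq_eq_dist_bures_factor[OF assms(1-3)]
    by (simp add: dist_commute)
qed

end
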